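(* Let $M\in\mathbb N$ and let $X(M)$ be the subshift defined below. Let $G_1'$ be the graph with one vertex and $2M+1$ loops named $\lambda,\rho_1,\dots,\rho_M,\eta_1,\dots,\eta_M$, and $G_1''$ the graph with one vertex and $M+2$ loops named $\lambda,\xi,\rho_1,\dots,\rho_M$; let $X_{G_1'},X_{G_1''}$ be their edge shifts (so $\mathcal B_n(X_{G_1'})$, resp. $\mathcal B_n(X_{G_1''})$, is the set of all words of length $n$ over the corresponding loop names). Then for every $n\ge1$ there exist bijections $$\{x\in P_n(X(M)):\text{the multiplier of }x\text{ is positive, neutral, or }\lambda^k\text{ for some }k\ge1\}\longrightarrow\mathcal B_n(X_{G_1'})$$ and $$\{x\in P_n(X(M)):\text{the multiplier of }x\text{ is negative, neutral, or a non-identity element of the submonoid generated by }\rho_1,\dots,\rho_M\}\longrightarrow\mathcal B_n(X_{G_1''}).$$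
   Context: Let $\Sigma_1=\{\lambda,\xi,\rho_1,\dots,\rho_M,\eta_1,\dots,\eta_M\}$. $\mathcal M_1(M)$ is the monoid with zero generated by $\Sigma_1$ and an identity $\mathbf 1$, subject only to the relations $\lambda\rho_i=\mathbf 1$, $\lambda\eta_i=0$, $\xi\eta_i=\mathbf 1$, $\xi\rho_i=0$ ($1\le i\le M$), $\mathbf 1$ is the identity and $0$ is absorbing; no other relations. $\mathit{red}:\Sigma_1^*\to\mathcal M_1(M)$ sends a word to the product of its letters (empty word to $\mathbf 1$). $X(M)=\{x\in\Sigma_1^{\mathbb Z}:\mathit{red}(x_i\cdots x_j)\neq 0\ \forall i\le j\}$ with shift $\sigma$; $P_n(X(M))=\{x\in X(M):\sigma^nx=x\}$, and the periodic defining block of $x\in P_n(X(M))$ is $x_0\cdots x_{n-1}$. $\mathcal M_1^+$ is the submonoid generated by $\rho_i,\eta_i$ and $\mathcal M_1^-$ the submonoid generated by $\lambda,\xi$. Every block $\alpha$ can be written $\alpha=\alpha_+\alpha_-$ with $\mathit{red}(\alpha_+)\in\mathcal M_1^+$, $\mathit{red}(\alpha_-)\in\mathcal M_1^-$; the multiplier of $\alpha$ (and of $\alpha^\infty$) is $\mathit{red}(\alpha_-\alpha_+)$, called positive if in $\mathcal M_1^+\setminus\{\mathbf 1\}$, negative if in $\mathcal M_1^-\setminus\{\mathbf 1\}$, neutral if equal to $\mathbf 1$. *)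

theory Defs
  imports Main
begin

datatype sym = Lam | Xi | Rho nat | Eta nat

definition Sigma1 :: "nat \<Rightarrow> sym set" where
  "Sigma1 M = {Lam, Xi} \<union> Rho ` {1..M} \<union> Eta ` {1..M}"

text \<open>The free monoid with zero on Sigma_1: words (Some w) plus a zero (None).
  mcong M is the congruence generated by the defining relations of M_1(M)
  (zero is absorbing, so it is a congruence on the free monoid with zero).\<close>
inductive mcong :: "nat \<Rightarrow> sym list option \<Rightarrow> sym list option \<Rightarrow> bool" for M where
  refl: "mcong M u u"
| sym: "mcong M u v \<Longrightarrow> mcong M v u"
| trans: "mcong M u v \<Longrightarrow> mcong M v w \<Longrightarrow> mcong M u w"
| lam_rho: "i \<in> {1..M} \<Longrightarrow> mcong M (Some (u @ [Lam, Rho i] @ v)) (Some (u @ v))"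
| xi_eta: "i \<in> {1..M} \<Longrightarrow> mcong M (Some (u @ [Xi, Eta i] @ v)) (Some (u @ v))"
| lam_eta: "i \<in> {1..M} \<Longrightarrow> mcong M (Some (u @ [Lam, Eta i] @ v)) None"
| xi_rho: "i \<in> {1..M} \<Longrightarrow> mcong M (Some (u @ [Xi, Rho i] @ v)) None"

text \<open>Elements of M_1(M) are congruence classes.\<close>
type_synonym melem = "sym list option set"

definition red :: "nat \<Rightarrow> sym list \<Rightarrow> melem" where
  "red M w = {v. mcong M (Some w) v}"

definition mzero :: "nat \<Rightarrow> melem" where
  "mzero M = {v. mcong M None v}"

definition mone :: "nat \<Rightarrow> melem" where
  "mone M = red M []"

definition Mplus :: "nat \<Rightarrow> melem set" where
  "Mplus M = {red M w | w. set w \<subseteq> Rho ` {1..M} \<union> Eta ` {1..M}}"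

definition Mminus :: "nat \<Rightarrow> melem set" where
  "Mminus M = {red M w | w. set w \<subseteq> {Lam, Xi}}"

definition Mrho :: "nat \<Rightarrow> melem set" where
  "Mrho M = {red M w | w. set w \<subseteq> Rho ` {1..M}}"

definition multiplier :: "nat \<Rightarrow> sym list \<Rightarrow> melem" where
  "multiplier M \<alpha> =
     (let d = (SOME (a, b). \<alpha> = a @ b \<and> red M a \<in> Mplus M \<and> red M b \<in> Mminus M)
      in red M (snd d @ fst d))"

definition mult_positive :: "nat \<Rightarrow> sym list \<Rightarrow> bool" where
  "mult_positive M \<alpha> \<longleftrightarrow> multiplier M \<alpha> \<in> Mplus M - {mone M}"

definition mult_negative :: "nat \<Rightarrow> sym list \<Rightarrow> bool" where
  "mult_negative M \<alpha> \<longleftrightarrow> multiplier M \<alpha> \<in> Mminus M - {mone M}"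

definition mult_neutral :: "nat \<Rightarrow> sym list \<Rightarrow> bool" where
  "mult_neutral M \<alpha> \<longleftrightarrow> multiplier M \<alpha> = mone M"

definition block :: "(int \<Rightarrow> sym) \<Rightarrow> int \<Rightarrow> int \<Rightarrow> sym list" where
  "block x i j = map x [i..j]"

definition XM :: "nat \<Rightarrow> (int \<Rightarrow> sym) set" where
  "XM M = {x. (\<forall>i. x i \<in> Sigma1 M) \<and> (\<forall>i j. i \<le> j \<longrightarrow> red M (block x i j) \<noteq> mzero M)}"

definition shift :: "(int \<Rightarrow> sym) \<Rightarrow> int \<Rightarrow> sym" where
  "shift x = (\<lambda>i. x (i + 1))"

definition Pn :: "nat \<Rightarrow> nat \<Rightarrow> (int \<Rightarrow> sym) set" where
  "Pn M n = {x \<in> XM M. (shift ^^ n) x = x}"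

definition defblock :: "nat \<Rightarrow> (int \<Rightarrow> sym) \<Rightarrow> sym list" where
  "defblock n x = map (\<lambda>k. x (int k)) [0..<n]"

definition loopsG1' :: "nat \<Rightarrow> sym set" where
  "loopsG1' M = {Lam} \<union> Rho ` {1..M} \<union> Eta ` {1..M}"

definition loopsG1'' :: "nat \<Rightarrow> sym set" where
  "loopsG1'' M = {Lam, Xi} \<union> Rho ` {1..M}"

definition Bn :: "sym set \<Rightarrow> nat \<Rightarrow> sym list set" where
  "Bn L n = {w. length w = n \<and> set w \<subseteq> L}"

end

theory Submission
  imports Defs
begin

text \<open>Cancelling the factors \<open>\<lambda>\<rho>\<^sub>i\<close> and \<open>\<xi>\<eta>\<^sub>i\<close> and sending \<open>\<lambda>\<eta>\<^sub>i\<close>, \<open>\<xi>\<rho>\<^sub>i\<close> to zero is a confluent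
  rewriting of words, so every nonzero element of \<open>M\<^sub>1(M)\<close> has a unique normal form \<open>c q\<close>
  with \<open>c\<close> a word in the closers \<open>\<rho>\<^sub>i, \<eta>\<^sub>i\<close> and \<open>q\<close> a word in the openers \<open>\<lambda>, \<xi>\<close>.
  A periodic point is the repetition of a block \<open>\<alpha>\<close> with \<open>\<alpha>\<alpha> \<noteq> 0\<close>; if \<open>\<alpha>\<close> has normal form
  \<open>c q\<close>, its multiplier is \<open>q c\<close>, whose normal form \<open>m\<close> consists of closers only or of openers
  only, and \<open>\<alpha>\<^sup>k\<^sup>+\<^sup>1\<close> has normal form \<open>c m\<^sup>k q\<close>.

  The first bijection forgets the difference between \<open>\<xi>\<close> and \<open>\<lambda>\<close>. An opener that cancels
  against a closer of the periodic word is determined by that closer; the openers that never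
  cancel are those of \<open>m\<close>, and they can be restored exactly when they are all \<open>\<lambda>\<close>, i.e. when
  the multiplier is positive, neutral or a power of \<open>\<lambda>\<close>. Reading the block twice from right
  to left with a stack of unmatched closers performs this reconstruction. The second bijection
  is dual: it replaces \<open>\<eta>\<^sub>i\<close> by \<open>\<rho>\<^sub>i\<close>, recovers a closer from the opener it cancels
  against, and needs the unmatched closers of \<open>m\<close> to be \<open>\<rho>\<close>'s.\<close>

section \<open>Normal forms in M_1(M)\<close>

definition openers :: "sym set" where
  "openers = {Lam, Xi}"

definition closers :: "nat \<Rightarrow> sym set" where
  "closers M = Rho ` {1..M} \<union> Eta ` {1..M}"

definition cancels :: "sym \<Rightarrow> sym \<Rightarrow> bool" where
  "cancels a b \<longleftrightarrow> (a = Lam \<and> (\<exists>i. b = Rho i)) \<or> (a = Xi \<and> (\<exists>i. b = Eta i))"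

lemma opener_not_closer: "a \<in> openers \<Longrightarrow> a \<notin> closers M"
  by (auto simp: openers_def closers_def)

lemma closer_not_opener: "b \<in> closers M \<Longrightarrow> b \<notin> openers"
  by (auto simp: openers_def closers_def)

lemma Sigma1_eq: "Sigma1 M = openers \<union> closers M"
  by (auto simp: Sigma1_def openers_def closers_def)

text \<open>Normal forms are \<open>sym list option\<close>, with \<open>None\<close> for zero; \<open>cons_nf M a v\<close> is the normal
  form of \<open>a\<close> times the normal form \<open>v\<close>.\<close>

fun cons_nf :: "nat \<Rightarrow> sym \<Rightarrow> sym list option \<Rightarrow> sym list option" where
  "cons_nf M a None = None"
| "cons_nf M a (Some []) = Some [a]"
| "cons_nf M a (Some (b # v)) =
     (if a \<in> openers \<and> b \<in> closers M then if cancels a b then Some v else None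
      else Some (a # b # v))"

definition nf :: "nat \<Rightarrow> sym list \<Rightarrow> sym list option" where
  "nf M w = foldr (cons_nf M) w (Some [])"

lemma nf_Nil [simp]: "nf M [] = Some []"
  by (simp add: nf_def)

lemma nf_Cons: "nf M (a # w) = cons_nf M a (nf M w)"
  by (simp add: nf_def)

lemma nf_append: "nf M (u @ v) = foldr (cons_nf M) u (nf M v)"
  by (simp add: nf_def)

lemma foldr_cons_nf_None [simp]: "foldr (cons_nf M) u None = None"
  by (induction u) auto

lemma cons_nf_closer: "b \<in> closers M \<Longrightarrow> cons_nf M b (Some v) = Some (b # v)"
  by (cases v) (auto dest: closer_not_opener)

lemma cons_nf_openers: "a \<in> openers \<Longrightarrow> set q \<subseteq> openers \<Longrightarrow> cons_nf M a (Some q) = Some (a # q)"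
  by (cases q) (auto dest: opener_not_closer)

lemma cons_nf_pair:
  "a \<in> openers \<Longrightarrow> b \<in> closers M \<Longrightarrow>
     cons_nf M a (cons_nf M b X) = (if cancels a b then X else None)"
  by (cases X) (auto simp: cons_nf_closer)

lemma bind_cons_nf: "Option.bind (cons_nf M a (Some u)) (\<lambda>w. nf M (w @ v)) = nf M (a # u @ v)"
proof (cases u)
  case (Cons b u')
  show ?thesis
  proof (cases "a \<in> openers \<and> b \<in> closers M")
    case True
    then show ?thesis
      using Cons by (simp add: nf_Cons cons_nf_pair)
  next
    case False
    then have "cons_nf M a (Some (b # u')) = Some (a # b # u')"
      by auto
    then show ?thesis
      using Cons by (simp add: nf_Cons)
  qed
qed (simp add: nf_Cons)

lemma nf_append_nf: "nf M (u @ v) = Option.bind (nf M u) (\<lambda>u'. nf M (u' @ v))"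
proof (induction u)
  case (Cons a u)
  show ?case
  proof (cases "nf M u")
    case (Some u')
    then show ?thesis
      using Cons bind_cons_nf[of M a u' v] by (simp add: nf_Cons)
  qed (use Cons in \<open>simp add: nf_Cons\<close>)
qed simp

lemma nf_nf: "nf M u = Some u' \<Longrightarrow> nf M u' = Some u'"
  using nf_append_nf[of M u "[]"] by simp

lemma nf_append_left: "nf M u = Some u' \<Longrightarrow> nf M (u @ v) = nf M (u' @ v)"
  using nf_append_nf[of M u v] by simp

lemma nf_append_right: "nf M v = Some v' \<Longrightarrow> nf M (u @ v) = nf M (u @ v')"
  by (simp add: nf_append nf_nf)

lemma nf_append_cong_right: "nf M v = nf M v' \<Longrightarrow> nf M (u @ v) = nf M (u @ v')"
  by (simp add: nf_append)

lemma nf_not_None_prefix: "nf M (u @ v) \<noteq> None \<Longrightarrow> nf M u \<noteq> None"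
  using nf_append_nf[of M u v] by (cases "nf M u") auto

lemma nf_not_None_suffix: "nf M (u @ v) \<noteq> None \<Longrightarrow> nf M v \<noteq> None"
  by (cases "nf M v") (auto simp: nf_append)

lemma nf_not_None_infix: "nf M (u @ w @ v) \<noteq> None \<Longrightarrow> nf M w \<noteq> None"
  using nf_not_None_prefix nf_not_None_suffix by blast

lemma nf_openers: "set q \<subseteq> openers \<Longrightarrow> nf M q = Some q"
  by (induction q) (simp_all add: nf_Cons cons_nf_openers)

lemma nf_closers_openers:
  "set c \<subseteq> closers M \<Longrightarrow> set q \<subseteq> openers \<Longrightarrow> nf M (c @ q) = Some (c @ q)"
  by (induction c) (simp_all add: nf_Cons nf_openers cons_nf_closer)

lemma nf_closers: "set c \<subseteq> closers M \<Longrightarrow> nf M c = Some c"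
  using nf_closers_openers[of c M "[]"] by simp

lemma nf_one_sided_between:
  assumes "set c \<subseteq> closers M" "set q \<subseteq> openers" "set m \<subseteq> closers M \<or> set m \<subseteq> openers"
  shows "nf M (c @ m @ q) = Some (c @ m @ q)"
  using assms nf_closers_openers[of "c @ m" M q] nf_closers_openers[of c M "m @ q"] by auto

lemma nf_snoc_pair:
  assumes "set c \<subseteq> closers M" "set q \<subseteq> openers" "b \<in> openers" "a \<in> closers M"
  shows "nf M (c @ q @ [b, a]) = (if cancels b a then Some (c @ q) else None)"
  using assms nf_append[of M "c @ q" "[b, a]"] nf_closers_openers[of c M q]
  by (simp add: nf_Cons cons_nf_pair nf_def)

lemma closers_openers_unique:
  assumes "set c \<subseteq> closers M" "set q \<subseteq> openers" "set c' \<subseteq> closers M" "set q' \<subseteq> openers"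
    and "c @ q = c' @ q'"
  shows "c = c' \<and> q = q'"
  using assms
proof (induction c arbitrary: c')
  case Nil
  show ?case
  proof (cases c')
    case (Cons b c'')
    then have "b \<in> openers" "b \<in> closers M"
      using Nil by auto
    then show ?thesis
      by (auto dest: opener_not_closer)
  qed (use Nil in simp)
next
  case (Cons a c)
  note IH = Cons.IH and prems = Cons.prems
  show ?case
  proof (cases c')
    case Nil
    then have "a \<in> openers" "a \<in> closers M"
      using prems by auto
    then show ?thesis
      by (auto dest: opener_not_closer)
  next
    case (Cons b c'')
    then show ?thesis
      using IH[of c''] prems by auto
  qed
qed

lemma nf_closers_openers_form:
  "set w \<subseteq> Sigma1 M \<Longrightarrow> nf M w = Some v \<Longrightarrow>
     \<exists>c q. v = c @ q \<and> set c \<subseteq> closers M \<and> set q \<subseteq> openers"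
proof (induction w arbitrary: v)
  case (Cons a w)
  then obtain v' where v': "nf M w = Some v'"
    by (cases "nf M w") (auto simp: nf_Cons)
  with Cons obtain c q where cq: "v' = c @ q" "set c \<subseteq> closers M" "set q \<subseteq> openers"
    by auto
  have eq: "cons_nf M a (Some (c @ q)) = Some v"
    using Cons.prems v' cq by (simp add: nf_Cons)
  consider "a \<in> closers M" | "a \<in> openers" "c = []" | d c' where "a \<in> openers" "c = d # c'"
    using Cons.prems Sigma1_eq by (cases c) auto
  then show ?case
  proof cases
    case 1
    have "v = (a # c) @ q" "set (a # c) \<subseteq> closers M"
      using eq 1 cq by (simp_all add: cons_nf_closer)
    with cq show ?thesis
      by blast
  next
    case 2
    show ?thesis
    proof (intro exI conjI)
      show "v = [] @ (a # q)"
        using eq 2 cq by (simp add: cons_nf_openers)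
      show "set (a # q) \<subseteq> openers"
        using 2 cq by simp
    qed simp
  next
    case 3
    have "v = c' @ q" "set c' \<subseteq> closers M"
      using eq 3 cq by (auto split: if_splits)
    with cq show ?thesis
      by blast
  qed
qed simp

lemma nf_SomeE:
  assumes "set w \<subseteq> Sigma1 M" "nf M w \<noteq> None"
  obtains c q where "nf M w = Some (c @ q)" "set c \<subseteq> closers M" "set q \<subseteq> openers"
  using assms nf_closers_openers_form by blast

lemma nf_openers_closers_one_sided:
  "set q \<subseteq> openers \<Longrightarrow> set c \<subseteq> closers M \<Longrightarrow> nf M (q @ c) = Some m \<Longrightarrow>
     set m \<subseteq> closers M \<or> set m \<subseteq> openers"
proof (induction q arbitrary: m)
  case Nil
  then show ?case using nf_closers by fastforce
next
  case (Cons a q)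
  then obtain m' where m': "nf M (q @ c) = Some m'"
    by (cases "nf M (q @ c)") (auto simp: nf_Cons)
  with Cons have one_sided: "set m' \<subseteq> closers M \<or> set m' \<subseteq> openers"
    by auto
  have "a \<in> openers" and eq: "cons_nf M a (Some m') = Some m"
    using Cons.prems m' by (auto simp: nf_Cons)
  show ?case
  proof (cases m')
    case Nil
    then have "m = [a]"
      using eq by simp
    then show ?thesis
      using \<open>a \<in> openers\<close> by simp
  next
    case (Cons b m'')
    show ?thesis
    proof (cases "b \<in> closers M")
      case True
      then have "set m' \<subseteq> closers M"
        using one_sided Cons by (auto dest: opener_not_closer)
      moreover have "m = m''"
        using eq Cons True \<open>a \<in> openers\<close> by (simp split: if_splits)
      ultimately show ?thesis
        using Cons by simp
    next
      case False
      then have "set m' \<subseteq> openers"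
        using one_sided Cons by auto
      moreover have "m = a # m'"
        using eq Cons False by simp
      ultimately show ?thesis
        using \<open>a \<in> openers\<close> by simp
    qed
  qed
qed

lemma cons_nf_mcong: "mcong M (map_option (Cons a) X) (cons_nf M a X)"
proof (cases X)
  case (Some v)
  show ?thesis
  proof (cases v)
    case (Cons b v')
    show ?thesis
    proof (cases "a \<in> openers \<and> b \<in> closers M")
      case True
      then have eq: "cons_nf M a X = (if cancels a b then Some v' else None)"
        using Some Cons by simp
      obtain i where "i \<in> {1..M}" "b = Rho i \<or> b = Eta i" "a = Lam \<or> a = Xi"
        using True by (auto simp: closers_def openers_def)
      then show ?thesis
        using Some Cons eq mcong.lam_rho[of i M "[]" v'] mcong.xi_eta[of i M "[]" v']
          mcong.lam_eta[of i M "[]" v'] mcong.xi_rho[of i M "[]" v']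
        by (auto simp: cancels_def)
    qed (use Some Cons mcong.refl in auto)
  qed (use Some mcong.refl in auto)
qed (simp add: mcong.refl)

lemma mcong_prepend: "mcong M u v \<Longrightarrow> mcong M (map_option ((@) w) u) (map_option ((@) w) v)"
proof (induction rule: mcong.induct)
  case (lam_rho i u v)
  then show ?case using mcong.lam_rho[of i M "w @ u" v] by simp
next
  case (xi_eta i u v)
  then show ?case using mcong.xi_eta[of i M "w @ u" v] by simp
next
  case (lam_eta i u v)
  then show ?case using mcong.lam_eta[of i M "w @ u" v] by simp
next
  case (xi_rho i u v)
  then show ?case using mcong.xi_rho[of i M "w @ u" v] by simp
qed (auto intro: mcong.intros)

lemma mcong_nf: "mcong M (Some w) (nf M w)"
proof (induction w)
  case (Cons a w)
  have "map_option ((@) [a]) X = map_option (Cons a) X" for X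
    by (cases X) simp_all
  then have "mcong M (Some (a # w)) (map_option (Cons a) (nf M w))"
    using mcong_prepend[OF Cons, of "[a]"] by simp
  then show ?case
    using cons_nf_mcong mcong.trans by (fastforce simp: nf_Cons)
qed (simp add: mcong.refl)

lemma mcong_imp_nf_eq: "mcong M u v \<Longrightarrow> Option.bind u (nf M) = Option.bind v (nf M)"
  by (induction rule: mcong.induct)
    (simp_all add: nf_append nf_Cons cons_nf_pair openers_def closers_def cancels_def)

lemma mcong_Some_iff: "mcong M (Some u) X \<longleftrightarrow> nf M u = Option.bind X (nf M)"
proof
  assume "nf M u = Option.bind X (nf M)"
  moreover have "mcong M X (Option.bind X (nf M))"
    by (cases X) (simp_all add: mcong_nf mcong.refl)
  ultimately show "mcong M (Some u) X"
    using mcong_nf[of M u] by (metis mcong.sym mcong.trans)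
qed (use mcong_imp_nf_eq in fastforce)

lemma mcong_class_eq_iff: "{w. mcong M X w} = {w. mcong M Y w} \<longleftrightarrow> mcong M X Y"
  by (auto intro: mcong.refl mcong.sym mcong.trans)

lemma red_eq_red_iff: "red M u = red M v \<longleftrightarrow> nf M u = nf M v"
  unfolding red_def mcong_class_eq_iff by (simp add: mcong_Some_iff)

lemma red_eq_mzero_iff: "red M u = mzero M \<longleftrightarrow> nf M u = None"
  unfolding red_def mzero_def mcong_class_eq_iff by (simp add: mcong_Some_iff)

lemma red_in_normal_iff:
  assumes "\<And>w. P w \<Longrightarrow> nf M w = Some w"
  shows "red M u \<in> {red M w |w. P w} \<longleftrightarrow> (\<exists>w. nf M u = Some w \<and> P w)"
  using assms by (auto simp: red_eq_red_iff) metis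

lemma red_in_Mplus_iff: "red M u \<in> Mplus M \<longleftrightarrow> (\<exists>c. nf M u = Some c \<and> set c \<subseteq> closers M)"
  unfolding Mplus_def closers_def[symmetric] by (rule red_in_normal_iff) (rule nf_closers)

lemma red_in_Mminus_iff: "red M u \<in> Mminus M \<longleftrightarrow> (\<exists>q. nf M u = Some q \<and> set q \<subseteq> openers)"
  unfolding Mminus_def openers_def[symmetric] by (rule red_in_normal_iff) (rule nf_openers)

lemma red_in_Mrho_iff: "red M u \<in> Mrho M \<longleftrightarrow> (\<exists>c. nf M u = Some c \<and> set c \<subseteq> Rho ` {1..M})"
  unfolding Mrho_def by (rule red_in_normal_iff) (rule nf_closers, auto simp: closers_def)

lemma split_closers_openers:
  "set \<alpha> \<subseteq> Sigma1 M \<Longrightarrow> nf M \<alpha> \<noteq> None \<Longrightarrow>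
     \<exists>a b. \<alpha> = a @ b \<and> (\<exists>c. nf M a = Some c \<and> set c \<subseteq> closers M) \<and>
       (\<exists>q. nf M b = Some q \<and> set q \<subseteq> openers)"
proof (induction \<alpha>)
  case Nil
  show ?case
    by (rule exI[of _ "[]"], rule exI[of _ "[]"]) simp
next
  case (Cons x \<alpha>)
  have "nf M \<alpha> \<noteq> None"
    using Cons.prems nf_not_None_suffix[of M "[x]" \<alpha>] by simp
  with Cons obtain a b c q where ab: "\<alpha> = a @ b" "nf M a = Some c" "set c \<subseteq> closers M"
    "nf M b = Some q" "set q \<subseteq> openers"
    by auto
  consider "x \<in> closers M" | "x \<in> openers" "c = []" | d c' where "x \<in> openers" "c = d # c'"
    using Cons.prems Sigma1_eq by (cases c) auto
  then show ?case
  proof cases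
    case 1
    show ?thesis
    proof (intro exI conjI)
      show "x # \<alpha> = (x # a) @ b" "nf M (x # a) = Some (x # c)" "set (x # c) \<subseteq> closers M"
        using 1 ab by (simp_all add: nf_Cons cons_nf_closer)
    qed (fact ab(4,5))+
  next
    case 2
    show ?thesis
    proof (intro exI conjI)
      show "x # \<alpha> = [] @ (x # \<alpha>)" "nf M [] = Some []" "set [] \<subseteq> closers M"
        by simp_all
      show "nf M (x # \<alpha>) = Some (x # q)" "set (x # q) \<subseteq> openers"
        using 2 ab nf_append_left[of M a "[]" b] by (simp_all add: nf_Cons cons_nf_openers)
    qed
  next
    case 3
    have "nf M ((x # a) @ b) \<noteq> None"
      using Cons.prems ab by simp
    then have "nf M (x # a) \<noteq> None"
      by (rule nf_not_None_prefix)
    show ?thesis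
    proof (intro exI conjI)
      show "nf M (x # a) = Some c'"
        using \<open>nf M (x # a) \<noteq> None\<close> 3 ab by (auto simp: nf_Cons split: if_splits)
      show "x # \<alpha> = (x # a) @ b" "set c' \<subseteq> closers M"
        using 3 ab by simp_all
    qed (fact ab(4,5))+
  qed
qed

lemma multiplier_eq:
  assumes "set \<alpha> \<subseteq> Sigma1 M" "nf M \<alpha> = Some (c @ q)" "set c \<subseteq> closers M" "set q \<subseteq> openers"
  shows "multiplier M \<alpha> = red M (q @ c)"
proof -
  define P where "P = (\<lambda>(a, b). \<alpha> = a @ b \<and> red M a \<in> Mplus M \<and> red M b \<in> Mminus M)"
  have "\<exists>d. P d"
    using split_closers_openers[OF assms(1)] assms(2)
    by (auto simp: P_def red_in_Mplus_iff red_in_Mminus_iff)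
  then have P_some: "P (SOME d. P d)"
    by (rule someI_ex)
  obtain a b where ab: "(SOME d. P d) = (a, b)"
    by (cases "SOME d. P d")
  with P_some obtain c' q' where ab_nf: "\<alpha> = a @ b" "nf M a = Some c'" "set c' \<subseteq> closers M"
    "nf M b = Some q'" "set q' \<subseteq> openers"
    by (auto simp: P_def red_in_Mplus_iff red_in_Mminus_iff)
  have "nf M \<alpha> = nf M (c' @ b)"
    unfolding ab_nf(1) by (rule nf_append_left[OF ab_nf(2)])
  also have "\<dots> = nf M (c' @ q')"
    by (rule nf_append_right[OF ab_nf(4)])
  also have "\<dots> = Some (c' @ q')"
    by (rule nf_closers_openers[OF ab_nf(3,5)])
  finally have "c' @ q' = c @ q"
    using assms(2) by simp
  then have "c' = c \<and> q' = q"
    by (rule closers_openers_unique[OF ab_nf(3,5) assms(3,4)])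
  have "nf M (b @ a) = nf M (q' @ a)"
    by (rule nf_append_left[OF ab_nf(4)])
  also have "\<dots> = nf M (q' @ c')"
    by (rule nf_append_right[OF ab_nf(2)])
  finally have "nf M (b @ a) = nf M (q @ c)"
    using \<open>c' = c \<and> q' = q\<close> by simp
  then show ?thesis
    using ab by (simp add: multiplier_def P_def red_eq_red_iff)
qed

section \<open>Periodic points and periodic blocks\<close>

definition periodic_blocks :: "nat \<Rightarrow> nat \<Rightarrow> sym list set" where
  "periodic_blocks M n = {\<alpha>. length \<alpha> = n \<and> set \<alpha> \<subseteq> Sigma1 M \<and> nf M (\<alpha> @ \<alpha>) \<noteq> None}"

text \<open>Only the factors \<open>q c\<close> between consecutive copies interact, and each reduces to the
  one-sided word \<open>m\<close>.\<close>

lemma nf_power: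
  assumes cq: "nf M \<alpha> = Some (c @ q)" "set c \<subseteq> closers M" "set q \<subseteq> openers"
    and m: "nf M (q @ c) = Some m" "set m \<subseteq> closers M \<or> set m \<subseteq> openers"
  shows "nf M (concat (replicate (Suc k) \<alpha>)) = Some (c @ concat (replicate k m) @ q)"
proof (induction k)
  case (Suc k)
  have "nf M (concat (replicate (Suc (Suc k)) \<alpha>)) = nf M ((c @ q) @ c @ concat (replicate k m) @ q)"
    using nf_append_left[OF cq(1)] nf_append_right[OF Suc] by simp
  also have "\<dots> = nf M (c @ (q @ c) @ concat (replicate k m) @ q)"
    by simp
  also have "\<dots> = nf M (c @ m @ concat (replicate k m) @ q)"
    by (rule nf_append_cong_right[OF nf_append_left[OF m(1)]])
  also have "\<dots> = Some (c @ concat (replicate (Suc k) m) @ q)"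
    using nf_one_sided_between[OF cq(2,3), of "concat (replicate (Suc k) m)"] m(2)
    by (simp only: set_concat set_replicate_Suc) simp
  finally show ?case .
qed (use cq in simp)

lemma periodic_block_decomp:
  assumes "set \<alpha> \<subseteq> Sigma1 M" "nf M (\<alpha> @ \<alpha>) \<noteq> None"
  obtains c q m where "nf M \<alpha> = Some (c @ q)" "set c \<subseteq> closers M" "set q \<subseteq> openers"
    "nf M (q @ c) = Some m" "set m \<subseteq> closers M \<or> set m \<subseteq> openers"
proof -
  obtain c q where cq: "nf M \<alpha> = Some (c @ q)" "set c \<subseteq> closers M" "set q \<subseteq> openers"
    using assms nf_not_None_prefix by (metis nf_SomeE)
  have "nf M (c @ (q @ c) @ q) \<noteq> None"
    using assms(2) nf_append_left[OF cq(1), of \<alpha>] nf_append_right[OF cq(1), of "c @ q"] by simp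
  then obtain m where "nf M (q @ c) = Some m"
    using nf_not_None_infix by blast
  with cq show thesis
    using that nf_openers_closers_one_sided by blast
qed

lemma nf_rotations:
  assumes "nf M \<alpha> = Some (c @ q)" "set c \<subseteq> closers M" "set q \<subseteq> openers"
    and "nf M (q @ c) = Some m" "set m \<subseteq> closers M \<or> set m \<subseteq> openers"
  shows "nf M (\<alpha> @ c) = Some (c @ m)" "nf M (q @ \<alpha>) = Some (m @ q)"
    "nf M (\<alpha> @ \<alpha>) = Some (c @ m @ q)"
proof -
  have "nf M (\<alpha> @ c) = nf M (c @ q @ c)" "nf M (q @ \<alpha>) = nf M ((q @ c) @ q)"
    using nf_append_left[OF assms(1)] nf_append_right[OF assms(1)] by simp_all
  then show "nf M (\<alpha> @ c) = Some (c @ m)" "nf M (q @ \<alpha>) = Some (m @ q)"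
    using nf_append_right[OF assms(4), of c] nf_append_left[OF assms(4), of q]
      nf_one_sided_between[OF assms(2) _ assms(5), of "[]"]
      nf_one_sided_between[OF _ assms(3) assms(5), of "[]"]
    by simp_all
  show "nf M (\<alpha> @ \<alpha>) = Some (c @ m @ q)"
    using nf_power[OF assms, of 1] by simp
qed

definition cyclic_ext :: "sym list \<Rightarrow> int \<Rightarrow> sym" where
  "cyclic_ext \<alpha> i = \<alpha> ! nat (i mod int (length \<alpha>))"

lemma funpow_shift: "(shift ^^ k) x = (\<lambda>i. x (i + int k))"
  by (induction k arbitrary: x) (auto simp: shift_def add.assoc)

lemma periodic_mod_eq:
  fixes x :: "int \<Rightarrow> 'a"
  assumes "\<And>i. x (i + p) = x i" "p > 0"
  shows "x i = x (i mod p)"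
proof -
  have add_multiple: "x (j + int k * p) = x j" for j k
  proof (induction k)
    case (Suc k)
    have "x (j + int (Suc k) * p) = x ((j + int k * p) + p)"
      by (simp add: algebra_simps)
    then show ?case
      using assms(1) Suc by simp
  qed simp
  show ?thesis
  proof (cases "i div p \<ge> 0")
    case True
    then show ?thesis
      using add_multiple[of "i mod p" "nat (i div p)"] by (simp add: mult.commute)
  next
    case False
    then show ?thesis
      using add_multiple[of i "nat (- (i div p))"] by (simp add: minus_div_mult_eq_mod)
  qed
qed

lemma Pn_cyclic_ext:
  assumes "n > 0" "x \<in> Pn M n"
  shows "cyclic_ext (defblock n x) = x"
proof
  fix i
  have "(shift ^^ n) x j = x j" for j
    using assms(2) by (simp add: Pn_def)
  then have "x (j + int n) = x j" for j
    by (simp add: funpow_shift)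
  then have "x i = x (i mod int n)"
    using assms(1) by (intro periodic_mod_eq) simp_all
  then show "cyclic_ext (defblock n x) i = x i"
    using assms(1) by (simp add: cyclic_ext_def defblock_def nat_less_iff)
qed

lemma nth_concat_replicate:
  "k < K * length \<alpha> \<Longrightarrow> concat (replicate K \<alpha>) ! k = \<alpha> ! (k mod length \<alpha>)"
proof (induction K arbitrary: k)
  case (Suc K)
  then show ?case
    by (cases "k < length \<alpha>") (auto simp: nth_append mod_if)
qed simp

lemma nth_block: "k < nat (j - i + 1) \<Longrightarrow> block x i j ! k = x (i + int k)"
  by (simp add: block_def)

lemma block_cyclic_ext_power:
  "block (cyclic_ext \<alpha>) 0 (int (K * length \<alpha>) - 1) = concat (replicate K \<alpha>)"
proof (rule nth_equalityI)
  show len: "length (block (cyclic_ext \<alpha>) 0 (int (K * length \<alpha>) - 1)) =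
    length (concat (replicate K \<alpha>))"
    by (simp add: block_def length_concat sum_list_replicate nat_mult_distrib)
  fix k
  assume "k < length (block (cyclic_ext \<alpha>) 0 (int (K * length \<alpha>) - 1))"
  then have "k < K * length \<alpha>"
    using len by (simp add: length_concat sum_list_replicate)
  then show "block (cyclic_ext \<alpha>) 0 (int (K * length \<alpha>) - 1) ! k = concat (replicate K \<alpha>) ! k"
    by (simp add: nth_block nat_mult_distrib cyclic_ext_def nth_concat_replicate zmod_int[symmetric])
qed

lemma block_cyclic_ext_infix:
  assumes "\<alpha> \<noteq> []" "i \<le> j"
  shows "\<exists>K u v. concat (replicate K \<alpha>) = u @ block (cyclic_ext \<alpha>) i j @ v"
proof -
  define n L r where "n = length \<alpha>" and "L = nat (j - i + 1)" and "r = nat (i mod int n)"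
  define P where "P = concat (replicate (L + 1) \<alpha>)"
  have "n > 0" "r < n"
    using assms(1) by (auto simp: n_def r_def nat_less_iff)
  have len_P: "length P = n + L * n"
    by (simp add: P_def length_concat sum_list_replicate n_def)
  have "L \<le> L * n"
    using \<open>n > 0\<close> by simp
  then have r_L: "r + L \<le> length P"
    using len_P \<open>r < n\<close> by linarith
  have "block (cyclic_ext \<alpha>) i j = take L (drop r P)"
  proof (rule nth_equalityI)
    show "length (block (cyclic_ext \<alpha>) i j) = length (take L (drop r P))"
      using r_L by (simp add: block_def L_def)
    fix k
    assume "k < length (block (cyclic_ext \<alpha>) i j)"
    then have k: "k < L"
      by (simp add: block_def L_def)
    then have "r + k < n + L * n"
      using r_L len_P by linarith
    then have "P ! (r + k) = \<alpha> ! ((r + k) mod n)"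
      unfolding P_def n_def by (intro nth_concat_replicate) (simp add: algebra_simps)
    moreover have "take L (drop r P) ! k = P ! (r + k)"
      using k r_L by simp
    ultimately have "take L (drop r P) ! k = \<alpha> ! ((r + k) mod n)"
      by simp
    moreover have "int ((r + k) mod n) = (i + int k) mod int n"
      using \<open>n > 0\<close> by (simp add: r_def zmod_int mod_add_left_eq)
    then have "nat ((i + int k) mod int n) = (r + k) mod n"
      by (metis nat_int)
    ultimately show "block (cyclic_ext \<alpha>) i j ! k = take L (drop r P) ! k"
      using k by (simp add: nth_block L_def cyclic_ext_def n_def[symmetric])
  qed
  then have "P = take r P @ block (cyclic_ext \<alpha>) i j @ drop L (drop r P)"
    by (simp only: append_take_drop_id)
  then show ?thesis
    unfolding P_def by blast
qed

lemma defblock_in_periodic_blocks: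
  assumes "n > 0" "x \<in> Pn M n"
  shows "defblock n x \<in> periodic_blocks M n"
proof -
  let ?\<alpha> = "defblock n x"
  have x: "x \<in> XM M" "cyclic_ext ?\<alpha> = x"
    using assms Pn_cyclic_ext by (auto simp: Pn_def)
  have "block x 0 (int (2 * n) - 1) = ?\<alpha> @ ?\<alpha>"
    using block_cyclic_ext_power[of ?\<alpha> 2] x(2) by (simp add: defblock_def numeral_2_eq_2)
  moreover have "red M (block x 0 (int (2 * n) - 1)) \<noteq> mzero M"
    using x(1) assms(1) by (simp add: XM_def)
  ultimately show ?thesis
    using x(1) by (auto simp: periodic_blocks_def XM_def defblock_def red_eq_mzero_iff)
qed

lemma cyclic_ext_in_Pn:
  assumes "n > 0" "\<alpha> \<in> periodic_blocks M n"
  shows "cyclic_ext \<alpha> \<in> Pn M n"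
proof -
  have \<alpha>: "length \<alpha> = n" "set \<alpha> \<subseteq> Sigma1 M" "nf M (\<alpha> @ \<alpha>) \<noteq> None"
    using assms(2) by (auto simp: periodic_blocks_def)
  obtain c q m where cqm: "nf M \<alpha> = Some (c @ q)" "set c \<subseteq> closers M" "set q \<subseteq> openers"
    "nf M (q @ c) = Some m" "set m \<subseteq> closers M \<or> set m \<subseteq> openers"
    using \<alpha>(2,3) by (rule periodic_block_decomp)
  have powers: "nf M (concat (replicate K \<alpha>)) \<noteq> None" for K
  proof (cases K)
    case (Suc k)
    then show ?thesis
      using nf_power[OF cqm, of k] by (metis option.distinct(1))
  qed simp
  have "\<alpha> \<noteq> []"
    using \<alpha>(1) assms(1) by auto
  have "nf M (block (cyclic_ext \<alpha>) i j) \<noteq> None" if ij: "i \<le> j" for i j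
  proof -
    obtain K u v where "concat (replicate K \<alpha>) = u @ block (cyclic_ext \<alpha>) i j @ v"
      using block_cyclic_ext_infix[OF \<open>\<alpha> \<noteq> []\<close> ij] by blast
    then show ?thesis
      using powers[of K] nf_not_None_infix by metis
  qed
  moreover have "cyclic_ext \<alpha> i \<in> Sigma1 M" for i
  proof -
    have "nat (i mod int n) < length \<alpha>"
      using \<alpha>(1) assms(1) by (simp add: nat_less_iff)
    then show ?thesis
      using \<alpha>(1,2) by (auto simp: cyclic_ext_def)
  qed
  moreover have "(shift ^^ n) (cyclic_ext \<alpha>) = cyclic_ext \<alpha>"
    using \<alpha>(1) by (simp add: funpow_shift fun_eq_iff cyclic_ext_def)
  ultimately show ?thesis
    by (simp add: Pn_def XM_def red_eq_mzero_iff)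
qed

lemma bij_betw_defblock:
  assumes "n > 0"
  shows "bij_betw (defblock n) (Pn M n) (periodic_blocks M n)"
proof (rule bij_betw_byWitness[where f' = cyclic_ext])
  have "defblock n (cyclic_ext \<alpha>) = \<alpha>" if "length \<alpha> = n" for \<alpha>
    using that by (intro nth_equalityI) (simp_all add: defblock_def cyclic_ext_def)
  then show "\<forall>\<alpha>\<in>periodic_blocks M n. defblock n (cyclic_ext \<alpha>) = \<alpha>"
    by (simp add: periodic_blocks_def)
qed (use assms Pn_cyclic_ext defblock_in_periodic_blocks cyclic_ext_in_Pn in auto)

definition Mplus_lam :: "nat \<Rightarrow> melem set" where
  "Mplus_lam M = Mplus M \<union> range (\<lambda>k. red M (replicate k Lam))"

definition Mminus_rho :: "nat \<Rightarrow> melem set" where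
  "Mminus_rho M = Mminus M \<union> Mrho M"

lemma mone_in_Mplus: "mone M \<in> Mplus M"
  unfolding Mplus_def mone_def by auto

lemma mone_in_Mminus: "mone M \<in> Mminus M"
  unfolding Mminus_def mone_def by auto

lemma mult_positive_neutral_lam_iff:
  "(mult_positive M \<alpha> \<or> mult_neutral M \<alpha> \<or> (\<exists>k\<ge>1. multiplier M \<alpha> = red M (replicate k Lam)))
     \<longleftrightarrow> multiplier M \<alpha> \<in> Mplus_lam M"
proof -
  have split_zero: "(\<exists>k. P k) \<longleftrightarrow> P 0 \<or> (\<exists>k\<ge>1. P k)" for P :: "nat \<Rightarrow> bool"
    by (metis One_nat_def Suc_le_eq neq0_conv)
  have "red M (replicate 0 Lam) = mone M"
    by (simp add: mone_def)
  then show ?thesis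
    using mone_in_Mplus split_zero[of "\<lambda>k. multiplier M \<alpha> = red M (replicate k Lam)"]
    by (auto simp: mult_positive_def mult_neutral_def Mplus_lam_def image_iff)
qed

lemma mult_negative_neutral_rho_iff:
  "(mult_negative M \<alpha> \<or> mult_neutral M \<alpha> \<or> multiplier M \<alpha> \<in> Mrho M - {mone M})
     \<longleftrightarrow> multiplier M \<alpha> \<in> Mminus_rho M"
  using mone_in_Mminus by (auto simp: mult_negative_def mult_neutral_def Mminus_rho_def)

lemma set_subset_singleton_iff_replicate: "set m \<subseteq> {a} \<longleftrightarrow> (\<exists>k. m = replicate k a)"
proof
  assume "set m \<subseteq> {a}"
  then have "replicate (length m) a = m"
    by (intro replicate_length_same) auto
  then show "\<exists>k. m = replicate k a"
    by metis
qed auto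

lemma red_in_Mplus_lam_iff:
  "red M u \<in> Mplus_lam M \<longleftrightarrow> (\<exists>m. nf M u = Some m \<and> (set m \<subseteq> closers M \<or> set m \<subseteq> {Lam}))"
proof -
  have "nf M (replicate k Lam) = Some (replicate k Lam)" for k
    by (rule nf_openers) (auto simp: openers_def)
  then have "red M u \<in> range (\<lambda>k. red M (replicate k Lam)) \<longleftrightarrow>
      (\<exists>m. nf M u = Some m \<and> set m \<subseteq> {Lam})"
    by (auto simp: image_iff red_eq_red_iff set_subset_singleton_iff_replicate)
  then show ?thesis
    by (auto simp: Mplus_lam_def red_in_Mplus_iff)
qed

lemma red_in_Mminus_rho_iff:
  "red M u \<in> Mminus_rho M \<longleftrightarrow>
     (\<exists>m. nf M u = Some m \<and> (set m \<subseteq> openers \<or> set m \<subseteq> Rho ` {1..M}))"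
  by (auto simp: Mminus_rho_def red_in_Mminus_iff red_in_Mrho_iff)

section \<open>Restoring the letter xi\<close>

definition xi_to_lam :: "sym \<Rightarrow> sym" where
  "xi_to_lam a = (if a = Xi then Lam else a)"

lemma xi_to_lam_in_loopsG1': "a \<in> Sigma1 M \<Longrightarrow> xi_to_lam a \<in> loopsG1' M"
  by (auto simp: Sigma1_def loopsG1'_def xi_to_lam_def)

text \<open>Read from right to left, keeping the closers not yet matched on a stack: a \<open>\<lambda>\<close> that
  meets \<open>\<eta>\<^sub>i\<close> on top of the stack can only have been \<open>\<xi>\<close>.\<close>

fun restore_xi_step :: "sym \<Rightarrow> sym list \<times> sym list \<Rightarrow> sym list \<times> sym list" where
  "restore_xi_step Lam (out, Eta i # st) = (Xi # out, st)"
| "restore_xi_step Lam (out, b # st) = (Lam # out, st)"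
| "restore_xi_step Lam (out, []) = (Lam # out, [])"
| "restore_xi_step a (out, st) = (a # out, a # st)"

text \<open>The first pass computes the closers left unmatched by one period, which is the stack
  the second pass has to start from.\<close>

definition restore_xi :: "sym list \<Rightarrow> sym list" where
  "restore_xi w = fst (foldr restore_xi_step w ([], snd (foldr restore_xi_step w ([], []))))"

lemma restore_xi_run:
  assumes "set \<alpha> \<subseteq> Sigma1 M" "set st \<subseteq> closers M" "nf M (\<alpha> @ st) = Some (c @ q)"
    and "set c \<subseteq> closers M" "set q \<subseteq> openers"
  shows "snd (foldr restore_xi_step (map xi_to_lam \<alpha>) ([], st)) = c \<and>
    (set q \<subseteq> {Lam} \<longrightarrow> fst (foldr restore_xi_step (map xi_to_lam \<alpha>) ([], st)) = \<alpha>)"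
  using assms
proof (induction \<alpha> arbitrary: c q)
  case Nil
  then have "st @ [] = c @ q"
    using nf_closers[of st M] by simp
  then have "c = st \<and> q = []"
    using closers_openers_unique[of st M "[]" c q] Nil by simp
  then show ?case
    by simp
next
  case (Cons a \<alpha>)
  have "nf M (\<alpha> @ st) \<noteq> None" "set (\<alpha> @ st) \<subseteq> Sigma1 M"
    using Cons.prems(1-3) nf_not_None_suffix[of M "[a]"] Sigma1_eq by auto
  then obtain c' q' where cq': "nf M (\<alpha> @ st) = Some (c' @ q')" "set c' \<subseteq> closers M"
    "set q' \<subseteq> openers"
    by (metis nf_SomeE)
  obtain out where run: "foldr restore_xi_step (map xi_to_lam \<alpha>) ([], st) = (out, c')"
    and out: "set q' \<subseteq> {Lam} \<Longrightarrow> out = \<alpha>"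
    using Cons.IH[OF _ Cons.prems(2) cq'] Cons.prems(1) by (metis prod.collapse set_subset_Cons subset_trans)
  have eq: "cons_nf M a (Some (c' @ q')) = Some (c @ q)"
    using Cons.prems(3) cq'(1) by (simp add: nf_Cons)
  consider "a \<in> closers M" | "a \<in> openers" "c' = []" | d c'' where "a \<in> openers" "c' = d # c''"
    using Cons.prems(1) Sigma1_eq by (cases c') auto
  then show ?case
  proof cases
    case 1
    then have "(a # c') @ q' = c @ q"
      using eq by (simp add: cons_nf_closer)
    then have "a # c' = c \<and> q' = q"
      using 1 cq' by (intro closers_openers_unique[OF _ _ Cons.prems(4,5)]) auto
    moreover have "a \<noteq> Lam" "xi_to_lam a = a"
      using 1 by (auto simp: xi_to_lam_def closers_def)
    ultimately show ?thesis
      using run out by (cases a) auto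
  next
    case 2
    have "set (a # q') \<subseteq> openers"
      using 2 cq'(3) by simp
    moreover have "[] @ (a # q') = c @ q"
      using eq 2 cq'(3) by (simp add: cons_nf_openers)
    ultimately have "[] = c \<and> a # q' = q"
      using closers_openers_unique[of "[]" M "a # q'" c q] Cons.prems(4,5) by (metis empty_subsetI list.set(1))
    moreover have "xi_to_lam a = Lam"
      using 2 by (auto simp: xi_to_lam_def openers_def)
    ultimately show ?thesis
      using run out 2 by auto
  next
    case 3
    then have "d \<in> closers M"
      using cq' by auto
    then have "cancels a d" "c'' @ q' = c @ q"
      using eq 3 by (auto split: if_splits)
    then have "c'' = c \<and> q' = q"
      using 3 cq' by (intro closers_openers_unique[OF _ _ Cons.prems(4,5)]) auto
    moreover have "restore_xi_step Lam (out, d # c'') = (a # out, c'')"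
      using \<open>cancels a d\<close> by (auto simp: cancels_def)
    moreover have "xi_to_lam a = Lam"
      using 3 by (auto simp: xi_to_lam_def openers_def)
    ultimately show ?thesis
      using run out 3 by auto
  qed
qed

lemma restore_xi_run_exists:
  assumes "set w \<subseteq> insert Lam (closers M)" "set st0 \<subseteq> closers M"
  shows "\<exists>\<alpha> st q. foldr restore_xi_step w ([], st0) = (\<alpha>, st) \<and> map xi_to_lam \<alpha> = w \<and>
    set \<alpha> \<subseteq> Sigma1 M \<and> set st \<subseteq> closers M \<and> set q \<subseteq> {Lam} \<and> nf M (\<alpha> @ st0) = Some (st @ q)"
  using assms(1)
proof (induction w)
  case Nil
  show ?case
  proof (intro exI conjI)
    show "foldr restore_xi_step [] ([], st0) = ([], st0)" "nf M ([] @ st0) = Some (st0 @ [])"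
      using nf_closers[OF assms(2)] by simp_all
  qed (use assms(2) in auto)
next
  case (Cons a w)
  then obtain \<alpha> st q where IH: "foldr restore_xi_step w ([], st0) = (\<alpha>, st)" "map xi_to_lam \<alpha> = w"
    "set \<alpha> \<subseteq> Sigma1 M" "set st \<subseteq> closers M" "set q \<subseteq> {Lam}" "nf M (\<alpha> @ st0) = Some (st @ q)"
    by auto
  have q: "set q \<subseteq> openers"
    using IH(5) by (auto simp: openers_def)
  consider "a \<in> closers M" | "a = Lam" "st = []"
    | i st' where "a = Lam" "st = Rho i # st'" "i \<in> {1..M}"
    | i st' where "a = Lam" "st = Eta i # st'" "i \<in> {1..M}"
    using Cons.prems IH(4) by (cases st) (auto simp: closers_def)
  then show ?case
  proof cases
    case 1
    then have "a \<noteq> Lam" "xi_to_lam a = a" "a \<in> Sigma1 M"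
      by (auto simp: xi_to_lam_def closers_def Sigma1_eq)
    show ?thesis
    proof (intro exI conjI)
      show "foldr restore_xi_step (a # w) ([], st0) = (a # \<alpha>, a # st)"
        using IH(1) \<open>a \<noteq> Lam\<close> by (cases a) auto
      show "nf M ((a # \<alpha>) @ st0) = Some ((a # st) @ q)"
        using IH(6) 1 by (simp add: nf_Cons cons_nf_closer)
    qed (use IH 1 \<open>xi_to_lam a = a\<close> \<open>a \<in> Sigma1 M\<close> in auto)
  next
    case 2
    show ?thesis
    proof (intro exI conjI)
      show "foldr restore_xi_step (a # w) ([], st0) = (Lam # \<alpha>, [])"
        using IH(1) 2 by simp
      show "nf M ((Lam # \<alpha>) @ st0) = Some ([] @ (Lam # q))"
        using IH(6) 2 q by (simp add: nf_Cons cons_nf_openers openers_def)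
    qed (use IH 2 in \<open>auto simp: Sigma1_def xi_to_lam_def\<close>)
  next
    case 3
    show ?thesis
    proof (intro exI conjI)
      show "foldr restore_xi_step (a # w) ([], st0) = (Lam # \<alpha>, st')"
        using IH(1) 3 by simp
      show "nf M ((Lam # \<alpha>) @ st0) = Some (st' @ q)"
        using IH(6) 3 by (simp add: nf_Cons openers_def closers_def cancels_def)
    qed (use IH 3 in \<open>auto simp: Sigma1_def xi_to_lam_def\<close>)
  next
    case 4
    show ?thesis
    proof (intro exI conjI)
      show "foldr restore_xi_step (a # w) ([], st0) = (Xi # \<alpha>, st')"
        using IH(1) 4 by simp
      show "nf M ((Xi # \<alpha>) @ st0) = Some (st' @ q)"
        using IH(6) 4 by (simp add: nf_Cons openers_def closers_def cancels_def)
    qed (use IH 4 in \<open>auto simp: Sigma1_def xi_to_lam_def\<close>)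
  qed
qed

lemma restore_xi_xi_to_lam:
  assumes "\<alpha> \<in> periodic_blocks M n" "multiplier M \<alpha> \<in> Mplus_lam M"
  shows "restore_xi (map xi_to_lam \<alpha>) = \<alpha>"
proof -
  have \<alpha>: "set \<alpha> \<subseteq> Sigma1 M" "nf M (\<alpha> @ \<alpha>) \<noteq> None"
    using assms(1) by (auto simp: periodic_blocks_def)
  then obtain c q m where cqm: "nf M \<alpha> = Some (c @ q)" "set c \<subseteq> closers M" "set q \<subseteq> openers"
    "nf M (q @ c) = Some m" "set m \<subseteq> closers M \<or> set m \<subseteq> openers"
    by (rule periodic_block_decomp)
  have m: "set m \<subseteq> closers M \<or> set m \<subseteq> {Lam}"
    using assms(2) multiplier_eq[OF \<alpha>(1) cqm(1-3)] cqm(4) by (auto simp: red_in_Mplus_lam_iff)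
  have "snd (foldr restore_xi_step (map xi_to_lam \<alpha>) ([], [])) = c"
    using restore_xi_run[OF \<alpha>(1), of "[]" c q] cqm by simp
  moreover have "fst (foldr restore_xi_step (map xi_to_lam \<alpha>) ([], c)) = \<alpha>"
  proof (cases "set m \<subseteq> closers M")
    case True
    then show ?thesis
      using restore_xi_run[OF \<alpha>(1) cqm(2), of "c @ m" "[]"] nf_rotations(1)[OF cqm] cqm(2) by simp
  next
    case False
    then show ?thesis
      using restore_xi_run[OF \<alpha>(1) cqm(2), of c m] nf_rotations(1)[OF cqm] cqm(2) m
      by (auto simp: openers_def)
  qed
  ultimately show ?thesis
    by (simp add: restore_xi_def)
qed

lemma restore_xi_in_periodic_blocks:
  assumes "w \<in> Bn (loopsG1' M) n"
  shows "restore_xi w \<in> periodic_blocks M n \<and> multiplier M (restore_xi w) \<in> Mplus_lam M \<and>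
    map xi_to_lam (restore_xi w) = w"
proof -
  have w: "set w \<subseteq> insert Lam (closers M)" "length w = n"
    using assms by (auto simp: Bn_def loopsG1'_def closers_def)
  obtain \<alpha>' st1 where run1: "foldr restore_xi_step w ([], []) = (\<alpha>', st1)" "set st1 \<subseteq> closers M"
    using restore_xi_run_exists[OF w(1), of "[]"] by auto
  obtain \<alpha> st q1 where run2: "foldr restore_xi_step w ([], st1) = (\<alpha>, st)" "map xi_to_lam \<alpha> = w"
    "set \<alpha> \<subseteq> Sigma1 M" "set st \<subseteq> closers M" "set q1 \<subseteq> {Lam}" "nf M (\<alpha> @ st1) = Some (st @ q1)"
    using restore_xi_run_exists[OF w(1) run1(2)] by auto
  have "nf M \<alpha> \<noteq> None"
    using run2(6) nf_not_None_prefix by (metis option.distinct(1))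
  with run2(3) obtain c q where cq: "nf M \<alpha> = Some (c @ q)" "set c \<subseteq> closers M" "set q \<subseteq> openers"
    by (rule nf_SomeE)
  have "st1 = c"
    using restore_xi_run[OF run2(3), of "[]" c q] cq run1(1) run2(2) by simp
  have "nf M (c @ q @ c) \<noteq> None"
    using run2(6) nf_append_left[OF cq(1), of c] \<open>st1 = c\<close> by simp
  then obtain m where m: "nf M (q @ c) = Some m"
    using nf_not_None_suffix by fastforce
  have one_sided: "set m \<subseteq> closers M \<or> set m \<subseteq> openers"
    using nf_openers_closers_one_sided[OF cq(3,2) m] .
  have "set m \<subseteq> closers M \<or> set m \<subseteq> {Lam}"
  proof (cases "set m \<subseteq> closers M")
    case False
    then have "set m \<subseteq> openers"
      using one_sided by blast
    moreover have "c @ m = st @ q1"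
      using nf_rotations(1)[OF cq m one_sided] run2(6) \<open>st1 = c\<close> by simp
    ultimately have "m = q1"
      using closers_openers_unique[OF cq(2) _ run2(4), of m q1] run2(5) by (auto simp: openers_def)
    then show ?thesis
      using run2(5) by simp
  qed simp
  then have "multiplier M \<alpha> \<in> Mplus_lam M"
    using multiplier_eq[OF run2(3) cq] m by (auto simp: red_in_Mplus_lam_iff)
  moreover have "\<alpha> \<in> periodic_blocks M n"
    using nf_rotations(3)[OF cq m one_sided] run2(2,3) w(2) by (auto simp: periodic_blocks_def)
  moreover have "restore_xi w = \<alpha>"
    by (simp add: restore_xi_def run1(1) run2(1))
  ultimately show ?thesis
    using run2(2) by simp
qed

lemma bij_betw_xi_to_lam:
  "bij_betw (map xi_to_lam) {\<alpha> \<in> periodic_blocks M n. multiplier M \<alpha> \<in> Mplus_lam M}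
     (Bn (loopsG1' M) n)"
proof (rule bij_betw_byWitness[where f' = restore_xi])
  show "map xi_to_lam ` {\<alpha> \<in> periodic_blocks M n. multiplier M \<alpha> \<in> Mplus_lam M} \<subseteq> Bn (loopsG1' M) n"
    by (auto simp: periodic_blocks_def Bn_def intro!: xi_to_lam_in_loopsG1')
qed (use restore_xi_xi_to_lam restore_xi_in_periodic_blocks in auto)

section \<open>Restoring the letters eta\<close>

definition eta_to_rho :: "sym \<Rightarrow> sym" where
  "eta_to_rho a = (case a of Eta i \<Rightarrow> Rho i | _ \<Rightarrow> a)"

lemma eta_to_rho_in_loopsG1'': "a \<in> Sigma1 M \<Longrightarrow> eta_to_rho a \<in> loopsG1'' M"
  by (auto simp: Sigma1_def loopsG1''_def eta_to_rho_def)

text \<open>Read from left to right, keeping the openers not yet matched on a stack (top first):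
  a \<open>\<rho>\<^sub>i\<close> that meets \<open>\<xi>\<close> on top of the stack can only have been \<open>\<eta>\<^sub>i\<close>.\<close>

fun restore_eta_step :: "sym list \<times> sym list \<Rightarrow> sym \<Rightarrow> sym list \<times> sym list" where
  "restore_eta_step (out, Xi # st) (Rho i) = (out @ [Eta i], st)"
| "restore_eta_step (out, b # st) (Rho i) = (out @ [Rho i], st)"
| "restore_eta_step (out, []) (Rho i) = (out @ [Rho i], [])"
| "restore_eta_step (out, st) a = (out @ [a], a # st)"

definition restore_eta :: "sym list \<Rightarrow> sym list" where
  "restore_eta w = fst (foldl restore_eta_step ([], snd (foldl restore_eta_step ([], []) w)) w)"

lemma restore_eta_run:
  assumes "set \<alpha> \<subseteq> Sigma1 M" "set st \<subseteq> openers" "nf M (rev st @ \<alpha>) = Some (c @ q)"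
    and "set c \<subseteq> closers M" "set q \<subseteq> openers"
  shows "snd (foldl restore_eta_step ([], st) (map eta_to_rho \<alpha>)) = rev q \<and>
    (set c \<subseteq> Rho ` {1..M} \<longrightarrow> fst (foldl restore_eta_step ([], st) (map eta_to_rho \<alpha>)) = \<alpha>)"
  using assms
proof (induction \<alpha> arbitrary: c q rule: rev_induct)
  case Nil
  then have "[] @ rev st = c @ q"
    using nf_openers[of "rev st" M] by simp
  moreover have "set (rev st) \<subseteq> openers"
    using Nil by simp
  ultimately have "[] = c \<and> rev st = q"
    using closers_openers_unique[of "[]" M "rev st" c q] Nil by (metis empty_subsetI list.set(1))
  then show ?case
    by auto
next
  case (snoc a \<alpha>)
  have "nf M (rev st @ \<alpha>) \<noteq> None" "set (rev st @ \<alpha>) \<subseteq> Sigma1 M"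
    using snoc.prems(1-3) nf_not_None_prefix[of M "rev st @ \<alpha>" "[a]"] Sigma1_eq by auto
  then obtain c' q' where cq': "nf M (rev st @ \<alpha>) = Some (c' @ q')" "set c' \<subseteq> closers M"
    "set q' \<subseteq> openers"
    by (metis nf_SomeE)
  obtain out where run: "foldl restore_eta_step ([], st) (map eta_to_rho \<alpha>) = (out, rev q')"
    and out: "set c' \<subseteq> Rho ` {1..M} \<Longrightarrow> out = \<alpha>"
    using snoc.IH[OF _ snoc.prems(2) cq'] snoc.prems(1) by (metis prod.collapse set_append le_sup_iff)
  have eq: "nf M (c' @ q' @ [a]) = Some (c @ q)"
    using snoc.prems(3) nf_append_left[OF cq'(1), of "[a]"] by simp
  consider "a \<in> openers" | "a \<in> closers M" "q' = []" | b q3 where "a \<in> closers M" "q' = q3 @ [b]"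
    using snoc.prems(1) Sigma1_eq by (cases q' rule: rev_cases) auto
  then show ?case
  proof cases
    case 1
    then have "set (q' @ [a]) \<subseteq> openers"
      using cq' by simp
    moreover from this have "c' @ (q' @ [a]) = c @ q"
      using eq cq'(2) nf_closers_openers[of c' M "q' @ [a]"] by simp
    ultimately have "c' = c \<and> q' @ [a] = q"
      using closers_openers_unique[of c' M "q' @ [a]" c q] cq'(2) snoc.prems(4,5) by blast
    moreover have "eta_to_rho a = a" "restore_eta_step (out, rev q') a = (out @ [a], a # rev q')"
      using 1 by (auto simp: eta_to_rho_def openers_def)
    ultimately show ?thesis
      using run out by auto
  next
    case 2
    then have "set (c' @ [a]) \<subseteq> closers M"
      using cq' by simp
    moreover from this have "(c' @ [a]) @ [] = c @ q"
      using eq 2 nf_closers[of "c' @ [a]" M] by simp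
    ultimately have "c' @ [a] = c \<and> [] = q"
      using closers_openers_unique[of "c' @ [a]" M "[]" c q] snoc.prems(4,5)
      by (metis empty_subsetI list.set(1))
    moreover obtain i where "a = Rho i \<or> a = Eta i" "eta_to_rho a = Rho i"
      using 2 by (auto simp: closers_def eta_to_rho_def)
    ultimately show ?thesis
      using run out 2 by (auto simp: image_iff)
  next
    case 3
    then have "b \<in> openers"
      using cq' by auto
    then have "cancels b a" "c' @ q3 = c @ q"
      using eq 3 cq' nf_snoc_pair[of c' M q3 b a] by (auto split: if_splits)
    then have "c' = c \<and> q3 = q"
      using closers_openers_unique[of c' M q3 c q] cq' 3 snoc.prems(4,5) by auto
    moreover obtain i where i: "a = Rho i \<or> a = Eta i" "eta_to_rho a = Rho i"
      using 3 by (auto simp: closers_def eta_to_rho_def)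
    moreover have "restore_eta_step (out, b # rev q3) (Rho i) = (out @ [a], rev q3)"
      using \<open>cancels b a\<close> i by (auto simp: cancels_def)
    ultimately show ?thesis
      using run out 3 by auto
  qed
qed

lemma restore_eta_run_exists:
  assumes "set w \<subseteq> openers \<union> Rho ` {1..M}" "set st0 \<subseteq> openers"
  shows "\<exists>\<alpha> st c. foldl restore_eta_step ([], st0) w = (\<alpha>, st) \<and> map eta_to_rho \<alpha> = w \<and>
    set \<alpha> \<subseteq> Sigma1 M \<and> set st \<subseteq> openers \<and> set c \<subseteq> Rho ` {1..M} \<and>
    nf M (rev st0 @ \<alpha>) = Some (c @ rev st)"
  using assms(1)
proof (induction w rule: rev_induct)
  case Nil
  show ?case
  proof (intro exI conjI)
    show "foldl restore_eta_step ([], st0) [] = ([], st0)" "nf M (rev st0 @ []) = Some ([] @ rev st0)"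
      using nf_openers[of "rev st0" M] assms(2) by simp_all
  qed (use assms(2) in auto)
next
  case (snoc a w)
  then obtain \<alpha> st c where IH: "foldl restore_eta_step ([], st0) w = (\<alpha>, st)" "map eta_to_rho \<alpha> = w"
    "set \<alpha> \<subseteq> Sigma1 M" "set st \<subseteq> openers" "set c \<subseteq> Rho ` {1..M}"
    "nf M (rev st0 @ \<alpha>) = Some (c @ rev st)"
    by auto
  have c: "set c \<subseteq> closers M"
    using IH(5) by (auto simp: closers_def)
  have nf_snoc: "nf M (rev st0 @ \<alpha> @ [x]) = nf M (c @ rev st @ [x])" for x
    using nf_append_left[OF IH(6), of "[x]"] by simp
  consider "a \<in> openers" | i where "a = Rho i" "i \<in> {1..M}" "st = []"
    | i st' where "a = Rho i" "i \<in> {1..M}" "st = Xi # st'"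
    | i st' where "a = Rho i" "i \<in> {1..M}" "st = Lam # st'"
    using snoc.prems IH(4) by (cases st) (auto simp: openers_def)
  then show ?case
  proof cases
    case 1
    then have "a \<in> Sigma1 M" "eta_to_rho a = a" "a = Lam \<or> a = Xi"
      by (auto simp: Sigma1_eq eta_to_rho_def openers_def)
    show ?thesis
    proof (intro exI conjI)
      show "foldl restore_eta_step ([], st0) (w @ [a]) = (\<alpha> @ [a], a # st)"
        using IH(1) \<open>a = Lam \<or> a = Xi\<close> by auto
      show "nf M (rev st0 @ \<alpha> @ [a]) = Some (c @ rev (a # st))"
        using nf_snoc[of a] nf_closers_openers[OF c, of "rev st @ [a]"] IH(4) 1 by simp
    qed (use IH 1 \<open>a \<in> Sigma1 M\<close> \<open>eta_to_rho a = a\<close> in auto)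
  next
    case 2
    show ?thesis
    proof (intro exI conjI)
      show "foldl restore_eta_step ([], st0) (w @ [a]) = (\<alpha> @ [Rho i], [])"
        using IH(1) 2 by simp
      show "nf M (rev st0 @ \<alpha> @ [Rho i]) = Some ((c @ [Rho i]) @ rev [])"
        using nf_snoc[of "Rho i"] nf_closers[of "c @ [Rho i]" M] c 2 by (simp add: closers_def)
    qed (use IH 2 in \<open>auto simp: Sigma1_def eta_to_rho_def\<close>)
  next
    case 3
    show ?thesis
    proof (intro exI conjI)
      show "foldl restore_eta_step ([], st0) (w @ [a]) = (\<alpha> @ [Eta i], st')"
        using IH(1) 3 by simp
      show "nf M (rev st0 @ \<alpha> @ [Eta i]) = Some (c @ rev st')"
        using nf_snoc[of "Eta i"] nf_snoc_pair[OF c, of "rev st'" Xi "Eta i"] IH(4) 3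
        by (simp add: openers_def closers_def cancels_def)
    qed (use IH 3 in \<open>auto simp: Sigma1_def eta_to_rho_def\<close>)
  next
    case 4
    show ?thesis
    proof (intro exI conjI)
      show "foldl restore_eta_step ([], st0) (w @ [a]) = (\<alpha> @ [Rho i], st')"
        using IH(1) 4 by simp
      show "nf M (rev st0 @ \<alpha> @ [Rho i]) = Some (c @ rev st')"
        using nf_snoc[of "Rho i"] nf_snoc_pair[OF c, of "rev st'" Lam "Rho i"] IH(4) 4
        by (simp add: openers_def closers_def cancels_def)
    qed (use IH 4 in \<open>auto simp: Sigma1_def eta_to_rho_def\<close>)
  qed
qed

lemma restore_eta_eta_to_rho:
  assumes "\<alpha> \<in> periodic_blocks M n" "multiplier M \<alpha> \<in> Mminus_rho M"
  shows "restore_eta (map eta_to_rho \<alpha>) = \<alpha>"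
proof -
  have \<alpha>: "set \<alpha> \<subseteq> Sigma1 M" "nf M (\<alpha> @ \<alpha>) \<noteq> None"
    using assms(1) by (auto simp: periodic_blocks_def)
  then obtain c q m where cqm: "nf M \<alpha> = Some (c @ q)" "set c \<subseteq> closers M" "set q \<subseteq> openers"
    "nf M (q @ c) = Some m" "set m \<subseteq> closers M \<or> set m \<subseteq> openers"
    by (rule periodic_block_decomp)
  have m: "set m \<subseteq> openers \<or> set m \<subseteq> Rho ` {1..M}"
    using assms(2) multiplier_eq[OF \<alpha>(1) cqm(1-3)] cqm(4) by (auto simp: red_in_Mminus_rho_iff)
  have "snd (foldl restore_eta_step ([], []) (map eta_to_rho \<alpha>)) = rev q"
    using restore_eta_run[OF \<alpha>(1), of "[]" c q] cqm by simp
  moreover have "fst (foldl restore_eta_step ([], rev q) (map eta_to_rho \<alpha>)) = \<alpha>"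
  proof (cases "set m \<subseteq> openers")
    case True
    then show ?thesis
      using restore_eta_run[OF \<alpha>(1), of "rev q" "[]" "m @ q"] nf_rotations(2)[OF cqm] cqm(3) by simp
  next
    case False
    then have "set m \<subseteq> closers M"
      using m by (auto simp: closers_def)
    then show ?thesis
      using restore_eta_run[OF \<alpha>(1), of "rev q" m q] nf_rotations(2)[OF cqm] cqm(3) m False by simp
  qed
  ultimately show ?thesis
    by (simp add: restore_eta_def)
qed

lemma restore_eta_in_periodic_blocks:
  assumes "w \<in> Bn (loopsG1'' M) n"
  shows "restore_eta w \<in> periodic_blocks M n \<and> multiplier M (restore_eta w) \<in> Mminus_rho M \<and>
    map eta_to_rho (restore_eta w) = w"
proof -
  have w: "set w \<subseteq> openers \<union> Rho ` {1..M}" "length w = n"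
    using assms by (auto simp: Bn_def loopsG1''_def openers_def)
  obtain \<alpha>' st1 where run1: "foldl restore_eta_step ([], []) w = (\<alpha>', st1)" "set st1 \<subseteq> openers"
    using restore_eta_run_exists[OF w(1), of "[]"] by auto
  obtain \<alpha> st c' where run2: "foldl restore_eta_step ([], st1) w = (\<alpha>, st)" "map eta_to_rho \<alpha> = w"
    "set \<alpha> \<subseteq> Sigma1 M" "set st \<subseteq> openers" "set c' \<subseteq> Rho ` {1..M}"
    "nf M (rev st1 @ \<alpha>) = Some (c' @ rev st)"
    using restore_eta_run_exists[OF w(1) run1(2)] by auto
  have "nf M \<alpha> \<noteq> None"
    using run2(6) nf_not_None_suffix by (metis option.distinct(1))
  with run2(3) obtain c q where cq: "nf M \<alpha> = Some (c @ q)" "set c \<subseteq> closers M" "set q \<subseteq> openers"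
    by (rule nf_SomeE)
  have "rev st1 = q"
    using restore_eta_run[OF run2(3), of "[]" c q] cq run1(1) run2(2) by simp
  have "nf M ((q @ c) @ q) \<noteq> None"
    using run2(6) nf_append_right[OF cq(1), of q] \<open>rev st1 = q\<close> by simp
  then obtain m where m: "nf M (q @ c) = Some m"
    using nf_not_None_prefix by fastforce
  have one_sided: "set m \<subseteq> closers M \<or> set m \<subseteq> openers"
    using nf_openers_closers_one_sided[OF cq(3,2) m] .
  have "set m \<subseteq> openers \<or> set m \<subseteq> Rho ` {1..M}"
  proof (cases "set m \<subseteq> openers")
    case False
    then have "set m \<subseteq> closers M"
      using one_sided by blast
    moreover have "m @ q = c' @ rev st"
      using nf_rotations(2)[OF cq m one_sided] run2(6) \<open>rev st1 = q\<close> by simp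
    moreover have "set c' \<subseteq> closers M"
      using run2(5) by (auto simp: closers_def)
    ultimately have "m = c'"
      using closers_openers_unique[of m M q c' "rev st"] cq(3) run2(4) by auto
    then show ?thesis
      using run2(5) by simp
  qed simp
  then have "multiplier M \<alpha> \<in> Mminus_rho M"
    using multiplier_eq[OF run2(3) cq] m by (auto simp: red_in_Mminus_rho_iff)
  moreover have "\<alpha> \<in> periodic_blocks M n"
    using nf_rotations(3)[OF cq m one_sided] run2(2,3) w(2) by (auto simp: periodic_blocks_def)
  moreover have "restore_eta w = \<alpha>"
    by (simp add: restore_eta_def run1(1) run2(1))
  ultimately show ?thesis
    using run2(2) by simp
qed

lemma bij_betw_eta_to_rho:
  "bij_betw (map eta_to_rho) {\<alpha> \<in> periodic_blocks M n. multiplier M \<alpha> \<in> Mminus_rho M}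
     (Bn (loopsG1'' M) n)"
proof (rule bij_betw_byWitness[where f' = restore_eta])
  show "map eta_to_rho ` {\<alpha> \<in> periodic_blocks M n. multiplier M \<alpha> \<in> Mminus_rho M}
      \<subseteq> Bn (loopsG1'' M) n"
    by (auto simp: periodic_blocks_def Bn_def intro!: eta_to_rho_in_loopsG1'')
qed (use restore_eta_eta_to_rho restore_eta_in_periodic_blocks in auto)

theorem lemma3p1:
  fixes M n :: nat
  assumes "n \<ge> 1"
  shows "(\<exists>f. bij_betw f
            {x \<in> Pn M n. mult_positive M (defblock n x) \<or> mult_neutral M (defblock n x) \<or>
                (\<exists>k\<ge>1. multiplier M (defblock n x) = red M (replicate k Lam))}
            (Bn (loopsG1' M) n))
       \<and> (\<exists>g. bij_betw g
            {x \<in> Pn M n. mult_negative M (defblock n x) \<or> mult_neutral M (defblock n x) \<or>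
                multiplier M (defblock n x) \<in> Mrho M - {mone M}}
            (Bn (loopsG1'' M) n))"
proof -
  have blocks: "bij_betw (defblock n) (Pn M n) (periodic_blocks M n)"
    using assms by (intro bij_betw_defblock) simp
  have "bij_betw (map xi_to_lam \<circ> defblock n)
      {x \<in> Pn M n. multiplier M (defblock n x) \<in> Mplus_lam M} (Bn (loopsG1' M) n)"
    by (rule bij_betw_trans[OF bij_betw_Collect[OF blocks] bij_betw_xi_to_lam]) simp
  moreover have "bij_betw (map eta_to_rho \<circ> defblock n)
      {x \<in> Pn M n. multiplier M (defblock n x) \<in> Mminus_rho M} (Bn (loopsG1'' M) n)"
    by (rule bij_betw_trans[OF bij_betw_Collect[OF blocks] bij_betw_eta_to_rho]) simp
  ultimately show ?thesis
    unfolding mult_positive_neutral_lam_iff mult_negative_neutral_rho_iff by blast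
qed

end
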